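(* Let $\mu\ge 2$ and $D\ge 1$ be integers, and let $(V,T)$ be the deterministic rooted tree of depth $D$ with root $v_o$ in which every node at depth less than $D$ has exactly $\mu$ children; let $L$ be its set of $\mu^D$ leaves and $V_d$ the set of nodes at depth $d$. Every leaf carries the same mark $F_x=\nu>0$, and $F_v:=\sum_{x\in L(v)}F_x$ for $v\in V$, where $L(v)$ is the set of leaves descended from $v$. Labels $\chi$ on $V$ are generated as follows: given $\rho_1,\dots,\rho_D\in[0,1]$, let $\{Z_u,u\ne v_o\}$ be independent Bernoulli variables with $\mathbf{E}[Z_u]=\rho_d$ for $u\in V_d$; the root gets label $0$; in order of increasing depth, a node with $Z_u=0$ copies its parent's label and a node with $Z_u=1$ gets a brand new label. Independently, each leaf $x$ is declared wild with probability $\omega\in[0,1]$ (independently over leaves), and tame otherwise. Let $(q_1,\dots,q_D)$ be a probability distribution on $\{1,\dots,D\}$. Edges are generated as follows: let $N$ be a nonnegative integer random variable with $\mathbf{E}[N]=\nu\mu^D/2$, independent of everything else. For each of $N$ independent attempts: draw a height $s\in\{1,\dots,D\}$ with probability $q_s$; choose a node $v\in V_{D-s}$ with probability $F_v/F_{v_o}$; run two independent random walks from $v$, each of which, at a non-leaf node $u$, moves to a child $u'$ with probability $F_{u'}/F_u$, until absorbed at leaves $x$ and $y$. The attempt produces an agreement multi-edge if $x\neq y$ and $\chi(x)=\chi(y)$, and a conflict multi-edge if $\chi(x)\ne\chi(y)$ and at least one of $x,y$ is wild. For $t=0,\dots,D-1$ put $A_t:=\prod_{d=D-t}^{D}(1-\rho_d)^2$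 and $C_t:=(1-A_t)\,\omega(2-\omega)$. Then the expected number $M_A$ of agreement multi-edges and the expected number $M_C$ of conflict multi-edges are exactly \[ M_A=\frac{\nu\mu^D(\mu-1)}{2}\sum_{s=1}^{D}q_s\mu^{-s}\sum_{t=0}^{s-1}A_t\mu^t,\qquad M_C=\frac{\nu\mu^D(\mu-1)}{2}\sum_{s=1}^{D}q_s\mu^{-s}\sum_{t=0}^{s-1}C_t\mu^t. \]
   Context: Depth is distance from the root; the height of a node at depth $d$ is $D-d$. All random ingredients (tree labels, wildness, $N$, heights, start nodes, walks) are independent of one another except as specified. *)

theory Defs
  imports "HOL-Probability.Probability"
begin

(* The complete mu-ary tree of depth D: nodes are lists of digits in {0..<mu}
  of length at most D; the root is the empty list; depth = length. *)

definition nodes :: "nat \<Rightarrow> nat \<Rightarrow> nat list set" where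
  "nodes D mu = {u. length u \<le> D \<and> set u \<subseteq> {0..<mu}}"

definition level :: "nat \<Rightarrow> nat \<Rightarrow> nat \<Rightarrow> nat list set" where
  "level D mu d = {u \<in> nodes D mu. length u = d}"

definition leaves :: "nat \<Rightarrow> nat \<Rightarrow> nat list set" where
  "leaves D mu = level D mu D"

definition children :: "nat \<Rightarrow> nat list \<Rightarrow> nat list set" where
  "children mu u = {u @ [i] | i. i < mu}"

definition leaves_below :: "nat \<Rightarrow> nat \<Rightarrow> nat list \<Rightarrow> nat list set" where
  "leaves_below D mu v = {x \<in> leaves D mu. \<exists>w. x = v @ w}"

definition Fmark :: "nat \<Rightarrow> nat \<Rightarrow> real \<Rightarrow> nat list \<Rightarrow> real" where
  "Fmark D mu nu v = (\<Sum>x\<in>leaves_below D mu v. nu)"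

(* Labels: the root gets label [] (playing the role of label 0); a node u with
  Z u = 1 gets the brand new label u (its own name, distinct from all other labels);
  a node with Z u = 0 copies its parent's label. *)
function label :: "(nat list \<Rightarrow> bool) \<Rightarrow> nat list \<Rightarrow> nat list" where
  "label Z u = (if u = [] then [] else if Z u then u else label Z (butlast u))"
  by auto
termination by (relation "Wellfounded.measure (length \<circ> snd)") auto

declare label.simps[simp del]

definition Z_pmf :: "nat \<Rightarrow> nat \<Rightarrow> (nat \<Rightarrow> real) \<Rightarrow> (nat list \<Rightarrow> bool) pmf" where
  "Z_pmf D mu rho = Pi_pmf (nodes D mu - {[]}) False (\<lambda>u. bernoulli_pmf (rho (length u)))"

definition W_pmf :: "nat \<Rightarrow> nat \<Rightarrow> real \<Rightarrow> (nat list \<Rightarrow> bool) pmf" where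
  "W_pmf D mu omega = Pi_pmf (leaves D mu) False (\<lambda>_. bernoulli_pmf omega)"

definition step_pmf :: "nat \<Rightarrow> nat \<Rightarrow> real \<Rightarrow> nat list \<Rightarrow> nat list pmf" where
  "step_pmf D mu nu u =
     embed_pmf (\<lambda>w. if w \<in> children mu u then Fmark D mu nu w / Fmark D mu nu u else 0)"

primrec walk_steps :: "nat \<Rightarrow> nat \<Rightarrow> real \<Rightarrow> nat \<Rightarrow> nat list \<Rightarrow> nat list pmf" where
  "walk_steps D mu nu 0 u = return_pmf u"
| "walk_steps D mu nu (Suc k) u = bind_pmf (step_pmf D mu nu u) (walk_steps D mu nu k)"

definition walk_pmf :: "nat \<Rightarrow> nat \<Rightarrow> real \<Rightarrow> nat list \<Rightarrow> nat list pmf" where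
  "walk_pmf D mu nu v = walk_steps D mu nu (D - length v) v"

definition height_pmf :: "nat \<Rightarrow> (nat \<Rightarrow> real) \<Rightarrow> nat pmf" where
  "height_pmf D q = embed_pmf (\<lambda>s. if s \<in> {1..D} then q s else 0)"

definition start_pmf :: "nat \<Rightarrow> nat \<Rightarrow> real \<Rightarrow> nat \<Rightarrow> nat list pmf" where
  "start_pmf D mu nu s =
     embed_pmf (\<lambda>v. if v \<in> level D mu (D - s) then Fmark D mu nu v / Fmark D mu nu [] else 0)"

definition attempt_pmf :: "nat \<Rightarrow> nat \<Rightarrow> real \<Rightarrow> (nat \<Rightarrow> real) \<Rightarrow> (nat list \<times> nat list) pmf" where
  "attempt_pmf D mu nu q =
     bind_pmf (height_pmf D q) (\<lambda>s.
     bind_pmf (start_pmf D mu nu s) (\<lambda>v.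
     bind_pmf (walk_pmf D mu nu v) (\<lambda>x.
     bind_pmf (walk_pmf D mu nu v) (\<lambda>y. return_pmf (x, y)))))"

primrec attempts_pmf :: "nat \<Rightarrow> nat \<Rightarrow> real \<Rightarrow> (nat \<Rightarrow> real) \<Rightarrow> nat \<Rightarrow> (nat list \<times> nat list) list pmf" where
  "attempts_pmf D mu nu q 0 = return_pmf []"
| "attempts_pmf D mu nu q (Suc n) =
     bind_pmf (attempt_pmf D mu nu q) (\<lambda>a. map_pmf (Cons a) (attempts_pmf D mu nu q n))"

definition is_agreement :: "(nat list \<Rightarrow> bool) \<Rightarrow> nat list \<times> nat list \<Rightarrow> bool" where
  "is_agreement Z a = (fst a \<noteq> snd a \<and> label Z (fst a) = label Z (snd a))"

definition is_conflict :: "(nat list \<Rightarrow> bool) \<Rightarrow> (nat list \<Rightarrow> bool) \<Rightarrow> nat list \<times> nat list \<Rightarrow> bool" where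
  "is_conflict Z W a = (label Z (fst a) \<noteq> label Z (snd a) \<and> (W (fst a) \<or> W (snd a)))"

definition edge_experiment :: "nat \<Rightarrow> nat \<Rightarrow> real \<Rightarrow> (nat \<Rightarrow> real) \<Rightarrow> real \<Rightarrow> (nat \<Rightarrow> real)
     \<Rightarrow> nat pmf \<Rightarrow> (nat \<times> nat) pmf" where
  "edge_experiment D mu nu rho omega q N =
     bind_pmf N (\<lambda>n.
     bind_pmf (Z_pmf D mu rho) (\<lambda>Z.
     bind_pmf (W_pmf D mu omega) (\<lambda>W.
     map_pmf (\<lambda>es. (length (filter (is_agreement Z) es), length (filter (is_conflict Z W) es)))
       (attempts_pmf D mu nu q n))))"

definition A_coef :: "nat \<Rightarrow> (nat \<Rightarrow> real) \<Rightarrow> nat \<Rightarrow> real" where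
  "A_coef D rho t = (\<Prod>d = D - t..D. (1 - rho d)^2)"

definition C_coef :: "nat \<Rightarrow> (nat \<Rightarrow> real) \<Rightarrow> real \<Rightarrow> nat \<Rightarrow> real" where
  "C_coef D rho omega t = (1 - A_coef D rho t) * omega * (2 - omega)"

end

theory Submission
  imports Defs
begin

(*
  Given N, each count is a sum of N independent indicators, so its mean is E[N] times the
  probability that a single attempt produces an edge of that kind. Since all leaf marks are
  equal, the start node is uniform on its level and each walk is a uniform descent, so two
  walks from a node of height s coincide with probability mu^(-s) and otherwise split below
  a node of height t + 1 with probability (mu - 1) mu^(t - s). Two leaves split there share a
  label iff none of the 2(t + 1) nodes strictly below the split point gets a fresh label,
  which has probability A_t; a conflict additionally needs one of the two leaves to be wild,
  an independent event of probability omega (2 - omega).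
*)

lemma integrable_measure_pmf_bounded:
  fixes f :: "'a \<Rightarrow> real"
  assumes "\<And>x. x \<in> set_pmf M \<Longrightarrow> \<bar>f x\<bar> \<le> B"
  shows "integrable (measure_pmf M) f"
  by (rule measure_pmf.integrable_const_bound[where B=B]) (auto simp: AE_measure_pmf_iff assms)

lemma expectation_abs_le:
  fixes f :: "'a \<Rightarrow> real"
  assumes "\<And>x. \<bar>f x\<bar> \<le> B"
  shows "\<bar>measure_pmf.expectation M f\<bar> \<le> B"
proof -
  have "0 \<le> B" using assms[of undefined] by linarith
  have "\<bar>measure_pmf.expectation M f\<bar> \<le> measure_pmf.expectation M (\<lambda>x. \<bar>f x\<bar>)"
    by (rule integral_abs_bound)
  also have "\<dots> \<le> measure_pmf.expectation M (\<lambda>_. B)"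
    using assms \<open>0 \<le> B\<close> by (intro integral_mono integrable_measure_pmf_bounded[where B=B]) auto
  finally show ?thesis by simp
qed

lemma expectation_eq_const_on_set_pmf:
  fixes f :: "'a \<Rightarrow> real"
  assumes "\<And>x. x \<in> set_pmf M \<Longrightarrow> f x = c"
  shows "measure_pmf.expectation M f = c"
proof -
  have "measure_pmf.expectation M f = measure_pmf.expectation M (\<lambda>_. c)"
    using assms by (intro integral_cong_AE) (auto simp: AE_measure_pmf_iff)
  then show ?thesis by simp
qed

lemma expectation_bind_pmf:
  fixes f :: "'b \<Rightarrow> real"
  assumes "\<And>y. y \<in> set_pmf (bind_pmf M N) \<Longrightarrow> \<bar>f y\<bar> \<le> B"
  shows "measure_pmf.expectation (bind_pmf M N) f =
         measure_pmf.expectation M (\<lambda>x. measure_pmf.expectation (N x) f)"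
proof -
  \<comment> \<open>\<open>integral_bind\<close> wants a global bound, so cut \<open>f\<close> off outside the support first.\<close>
  define g where "g y = (if y \<in> set_pmf (bind_pmf M N) then f y else 0)" for y
  have g_bound: "\<bar>g y\<bar> \<le> max B 0" for y
    unfolding g_def using assms[of y] by (auto simp: le_max_iff_disj)
  have "measure_pmf.expectation (bind_pmf M N) g =
        measure_pmf.expectation M (\<lambda>x. measure_pmf.expectation (N x) g)"
    using measurable_measure_pmf[of N] unfolding measure_pmf_bind
    by (intro integral_bind[where K="count_space UNIV" and B="max B 0" and B'=1]) (auto simp: g_bound)
  moreover have "measure_pmf.expectation (bind_pmf M N) g = measure_pmf.expectation (bind_pmf M N) f"
    by (intro integral_cong_AE) (auto simp: AE_measure_pmf_iff g_def)
  moreover have "measure_pmf.expectation M (\<lambda>x. measure_pmf.expectation (N x) g) =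
      measure_pmf.expectation M (\<lambda>x. measure_pmf.expectation (N x) f)"
    by (intro integral_cong_AE) (auto simp: AE_measure_pmf_iff g_def intro!: integral_cong_AE)
  ultimately show ?thesis by simp
qed

lemma expectation_commute_pmf:
  fixes f :: "'a \<Rightarrow> 'b \<Rightarrow> real"
  assumes "\<And>x y. \<bar>f x y\<bar> \<le> B"
  shows "measure_pmf.expectation M (\<lambda>x. measure_pmf.expectation N (f x)) =
         measure_pmf.expectation N (\<lambda>y. measure_pmf.expectation M (\<lambda>x. f x y))"
proof -
  have pair_left: "measure_pmf.expectation (bind_pmf N (\<lambda>y. return_pmf (x, y))) (case_prod f) =
      measure_pmf.expectation N (f x)" for x
    using assms by (subst expectation_bind_pmf[where B=B]) auto
  have pair_right: "measure_pmf.expectation (bind_pmf M (\<lambda>x. return_pmf (x, y))) (case_prod f) =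
      measure_pmf.expectation M (\<lambda>x. f x y)" for y
    using assms by (subst expectation_bind_pmf[where B=B]) auto
  have "measure_pmf.expectation M (\<lambda>x. measure_pmf.expectation N (f x)) =
        measure_pmf.expectation (bind_pmf M (\<lambda>x. bind_pmf N (\<lambda>y. return_pmf (x, y)))) (case_prod f)"
    using assms by (subst expectation_bind_pmf[where B=B]) (auto simp: pair_left)
  also have "\<dots> = measure_pmf.expectation (bind_pmf N (\<lambda>y. bind_pmf M (\<lambda>x. return_pmf (x, y)))) (case_prod f)"
    by (subst bind_commute_pmf) (rule refl)
  also have "\<dots> = measure_pmf.expectation N (\<lambda>y. measure_pmf.expectation M (\<lambda>x. f x y))"
    using assms by (subst expectation_bind_pmf[where B=B]) (auto simp: pair_right)
  finally show ?thesis .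
qed

lemma expectation_of_bool_eq_prob:
  "measure_pmf.expectation M (\<lambda>x. of_bool (P x) :: real) = measure_pmf.prob M {x. P x}"
proof -
  have "(\<lambda>x. of_bool (P x) :: real) = indicator {x. P x}" by (auto simp: indicator_def)
  then show ?thesis by simp
qed

lemma expectation_of_bool_not_eq_prob:
  "measure_pmf.expectation M (\<lambda>x. of_bool (\<not> P x) :: real) = 1 - measure_pmf.prob M {x. P x}"
proof -
  have "measure_pmf.expectation M (\<lambda>x. of_bool (\<not> P x) :: real)
      = measure_pmf.expectation M (\<lambda>x. 1 - of_bool (P x))"
    by (intro Bochner_Integration.integral_cong refl) auto
  also have "\<dots> = 1 - measure_pmf.expectation M (\<lambda>x. of_bool (P x))"
    by (subst Bochner_Integration.integral_diff) (auto intro: integrable_measure_pmf_bounded[where B=1])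
  finally show ?thesis by (simp add: expectation_of_bool_eq_prob)
qed

lemma expectation_bind_pmf_linear:
  fixes F :: "nat \<Rightarrow> 'a pmf" and f :: "'a \<Rightarrow> real"
  assumes nonneg: "\<And>m. 0 \<le> f m" and bound: "\<And>n m. m \<in> set_pmf (F n) \<Longrightarrow> f m \<le> real n"
    and linear: "\<And>n. measure_pmf.expectation (F n) f = real n * c" and c: "0 \<le> c"
    and N: "integrable (measure_pmf N) real"
  shows "measure_pmf.expectation (bind_pmf N F) f = c * measure_pmf.expectation N real"
proof -
  \<comment> \<open>\<open>N\<close> may have unbounded support, so argue with nonnegative integrals.\<close>
  have inner: "(\<integral>\<^sup>+ m. ennreal (f m) \<partial>measure_pmf (F n)) = ennreal (real n * c)" for n
  proof -
    have "integrable (measure_pmf (F n)) f"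
      using nonneg bound by (intro integrable_measure_pmf_bounded[where B="real n"]) auto
    then show ?thesis using nonneg linear by (subst nn_integral_eq_integral) auto
  qed
  have "(\<integral>\<^sup>+ m. ennreal (f m) \<partial>measure_pmf (bind_pmf N F)) = (\<integral>\<^sup>+ n. ennreal (real n * c) \<partial>measure_pmf N)"
    by (simp add: inner)
  also have "\<dots> = ennreal (measure_pmf.expectation N (\<lambda>n. real n * c))"
    using c N by (subst nn_integral_eq_integral) auto
  finally have "(\<integral>\<^sup>+ m. ennreal (f m) \<partial>measure_pmf (bind_pmf N F)) =
      ennreal (measure_pmf.expectation N (\<lambda>n. real n * c))" .
  then have "measure_pmf.expectation (bind_pmf N F) f = measure_pmf.expectation N (\<lambda>n. real n * c)"
    using nonneg c by (subst integral_eq_nn_integral) (auto intro!: integral_nonneg)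
  then show ?thesis by simp
qed

lemma level_eq: "d \<le> D \<Longrightarrow> level D mu d = {w. set w \<subseteq> {0..<mu} \<and> length w = d}"
  by (auto simp: level_def nodes_def)

lemma finite_level: "finite (level D mu d)"
  by (auto simp: level_def nodes_def intro: finite_subset[OF _ finite_lists_length_le[of "{0..<mu}" D]])

lemma card_level: "d \<le> D \<Longrightarrow> card (level D mu d) = mu ^ d"
  by (simp add: level_eq card_lists_length_eq)

lemma finite_nodes: "finite (nodes D mu)"
  unfolding nodes_def using finite_lists_length_le[of "{0..<mu}" D] by (simp add: conj_commute)

lemma Fmark_eq:
  assumes "set v \<subseteq> {0..<mu}" "length v \<le> D"
  shows "Fmark D mu nu v = nu * real mu ^ (D - length v)"
proof -
  have leaves: "leaves_below D mu v = (\<lambda>w. v @ w) ` {w. set w \<subseteq> {0..<mu} \<and> length w = D - length v}"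
    using assms by (auto simp: leaves_below_def leaves_def level_def nodes_def subset_iff)
  have "card (leaves_below D mu v) = mu ^ (D - length v)"
    unfolding leaves by (subst card_image) (auto simp: inj_on_def card_lists_length_eq)
  then show ?thesis by (simp add: Fmark_def)
qed

lemma embed_pmf_eqI:
  assumes "\<And>x. f x = pmf p x"
  shows "embed_pmf f = p"
proof -
  have "f = pmf p" using assms by auto
  then show ?thesis using type_definition.Rep_inverse[OF td_pmf_embed_pmf] by simp
qed

lemma step_pmf_eq:
  assumes "set u \<subseteq> {0..<mu}" "length u < D" "mu > 0" "nu \<noteq> 0"
  shows "step_pmf D mu nu u = map_pmf (\<lambda>i. u @ [i]) (pmf_of_set {0..<mu})"
  unfolding step_pmf_def
proof (rule embed_pmf_eqI)
  fix w
  show "(if w \<in> children mu u then Fmark D mu nu w / Fmark D mu nu u else 0) =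
        pmf (map_pmf (\<lambda>i. u @ [i]) (pmf_of_set {0..<mu})) w"
  proof (cases "w \<in> children mu u")
    case True
    then obtain i where i: "i < mu" "w = u @ [i]" by (auto simp: children_def)
    have "Fmark D mu nu u = real mu * Fmark D mu nu w"
      using assms i Fmark_eq[of u mu D nu] Fmark_eq[of w mu D nu]
      by (simp flip: power_Suc add: Suc_diff_Suc)
    moreover have "Fmark D mu nu w \<noteq> 0"
      using assms i Fmark_eq[of w mu D nu] by simp
    moreover have "pmf (map_pmf (\<lambda>i. u @ [i]) (pmf_of_set {0..<mu})) w = 1 / real mu"
      using i by (simp add: pmf_map_inj'[of "\<lambda>i. u @ [i]"] inj_def indicator_def)
    ultimately show ?thesis using True by simp
  next
    case False
    then have "w \<notin> set_pmf (map_pmf (\<lambda>i. u @ [i]) (pmf_of_set {0..<mu}))"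
      using assms by (auto simp: children_def)
    then show ?thesis using False by (simp add: set_pmf_eq)
  qed
qed

abbreviation uniform_words :: "nat \<Rightarrow> nat \<Rightarrow> nat list pmf" where
  "uniform_words mu k \<equiv> replicate_pmf k (pmf_of_set {0..<mu})"

lemma set_uniform_words:
  "mu > 0 \<Longrightarrow> set_pmf (uniform_words mu k) = {w. set w \<subseteq> {0..<mu} \<and> length w = k}"
  by (auto simp: set_replicate_pmf)

lemma walk_steps_eq:
  assumes "mu > 0" "nu \<noteq> 0" "set u \<subseteq> {0..<mu}" "length u + k \<le> D"
  shows "walk_steps D mu nu k u = map_pmf (\<lambda>w. u @ w) (uniform_words mu k)"
  using assms(3,4)
proof (induction k arbitrary: u)
  case 0
  then show ?case by simp
next
  case (Suc k)
  have "walk_steps D mu nu (Suc k) u =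
     bind_pmf (pmf_of_set {0..<mu}) (\<lambda>i. walk_steps D mu nu k (u @ [i]))"
    using Suc.prems assms by (simp add: step_pmf_eq bind_map_pmf)
  also have "\<dots> = bind_pmf (pmf_of_set {0..<mu}) (\<lambda>i. map_pmf (\<lambda>w. (u @ [i]) @ w) (uniform_words mu k))"
    using Suc.prems assms by (intro bind_pmf_cong refl Suc.IH) auto
  also have "\<dots> = map_pmf (\<lambda>w. u @ w) (uniform_words mu (Suc k))"
    by (simp add: map_pmf_def bind_assoc_pmf bind_return_pmf)
  finally show ?case .
qed

lemma walk_pmf_eq:
  assumes "mu > 0" "nu \<noteq> 0" "set v \<subseteq> {0..<mu}" "length v \<le> D"
  shows "walk_pmf D mu nu v = map_pmf (\<lambda>w. v @ w) (uniform_words mu (D - length v))"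
  unfolding walk_pmf_def using assms by (intro walk_steps_eq) auto

lemma start_pmf_eq:
  assumes "mu > 0" "nu \<noteq> 0" "s \<le> D"
  shows "start_pmf D mu nu s = pmf_of_set (level D mu (D - s))"
  unfolding start_pmf_def
proof (rule embed_pmf_eqI)
  have card: "card (level D mu (D - s)) = mu ^ (D - s)"
    by (simp add: card_level)
  then have nonempty: "level D mu (D - s) \<noteq> {}"
    using assms by auto
  fix v
  show "(if v \<in> level D mu (D - s) then Fmark D mu nu v / Fmark D mu nu [] else 0) =
        pmf (pmf_of_set (level D mu (D - s))) v"
  proof (cases "v \<in> level D mu (D - s)")
    case True
    then have "set v \<subseteq> {0..<mu}" "length v = D - s"
      by (auto simp: level_eq)
    then have "Fmark D mu nu v = nu * real mu ^ s"
      using Fmark_eq[of v mu D nu] assms by auto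
    moreover have "Fmark D mu nu [] = nu * real mu ^ s * real mu ^ (D - s)"
      using Fmark_eq[of "[]" mu D nu] assms by (simp flip: power_add)
    ultimately show ?thesis
      using True assms card nonempty finite_level by simp
  next
    case False
    then show ?thesis using nonempty finite_level by simp
  qed
qed

lemma set_start_pmf:
  assumes "mu > 0" "nu \<noteq> 0" "s \<le> D"
  shows "set_pmf (start_pmf D mu nu s) = level D mu (D - s)"
proof -
  have "level D mu (D - s) \<noteq> {}"
    using assms card_level[of "D - s" D mu] by auto
  then show ?thesis
    using assms by (simp add: start_pmf_eq finite_level)
qed

lemma expectation_height_pmf:
  fixes g :: "nat \<Rightarrow> real"
  assumes "\<And>s. s \<in> {1..D} \<Longrightarrow> 0 \<le> q s" "(\<Sum>s = 1..D. q s) = 1"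
  shows "measure_pmf.expectation (height_pmf D q) g = (\<Sum>s = 1..D. q s * g s)"
proof -
  have pmf_height: "pmf (height_pmf D q) s = (if s \<in> {1..D} then q s else 0)" for s
    unfolding height_pmf_def
  proof (rule pmf_embed_pmf)
    have "(\<integral>\<^sup>+ s. ennreal (if s \<in> {1..D} then q s else 0) \<partial>count_space UNIV) =
        (\<Sum>s\<in>{1..D}. ennreal (q s))"
      by (subst nn_integral_count_space'[of "{1..D}"]) auto
    also have "\<dots> = 1"
      using assms by (subst sum_ennreal) auto
    finally show "(\<integral>\<^sup>+ s. ennreal (if s \<in> {1..D} then q s else 0) \<partial>count_space UNIV) = 1" .
  qed (use assms in auto)
  show ?thesis
    by (subst integral_measure_pmf_real[of "{1..D}"])
       (auto simp: pmf_height set_pmf_eq split: if_splits intro!: sum.cong)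
qed

lemma label_prefix: "\<exists>w. x = label Z x @ w"
proof (induction Z x rule: label.induct)
  case (1 Z u)
  show ?case
  proof (cases "u = [] \<or> Z u")
    case True
    then show ?thesis by (subst label.simps) auto
  next
    case False
    then obtain w where "butlast u = label Z (butlast u) @ w" using 1 by auto
    then have "u = label Z (butlast u) @ (w @ [last u])"
      using False by (metis append_assoc append_butlast_last_id)
    then show ?thesis using False by (subst label.simps) auto
  qed
qed

lemma length_label_ge:
  "1 \<le> k \<Longrightarrow> k \<le> length x \<Longrightarrow> Z (take k x) \<Longrightarrow> k \<le> length (label Z x)"
proof (induction Z x rule: label.induct)
  case (1 Z u)
  show ?case
  proof (cases "Z u")
    case True
    then show ?thesis using 1 by (subst label.simps) auto
  next
    case False
    then have "u \<noteq> []" "k \<le> length (butlast u)"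
      using 1 by (auto simp: le_less)
    moreover from this have "take k (butlast u) = take k u"
      by (simp add: butlast_conv_take)
    ultimately show ?thesis
      using 1 False by (subst label.simps) auto
  qed
qed

lemma label_take_eq:
  "c \<le> length x \<Longrightarrow> (\<forall>k. c < k \<and> k \<le> length x \<longrightarrow> \<not> Z (take k x)) \<Longrightarrow>
   label Z x = label Z (take c x)"
proof (induction Z x rule: label.induct)
  case (1 Z u)
  show ?case
  proof (cases "c = length u")
    case False
    then have "c < length u" using 1 by auto
    then have "u \<noteq> []" "\<not> Z u" "c \<le> length (butlast u)" "take c (butlast u) = take c u"
      using 1(3)[rule_format, of "length u"] by (auto simp: butlast_conv_take)
    moreover have "\<forall>k. c < k \<and> k \<le> length (butlast u) \<longrightarrow> \<not> Z (take k (butlast u))"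
      using 1(3) by (auto simp: butlast_conv_take)
    ultimately show ?thesis using 1 by (subst label.simps) auto
  qed simp
qed

lemma label_eq_iff:
  assumes "i \<noteq> j" "x = p @ i # a" "y = p @ j # b"
  shows "label Z x = label Z y \<longleftrightarrow>
    (\<forall>k. length p < k \<and> k \<le> length x \<longrightarrow> \<not> Z (take k x)) \<and>
    (\<forall>k. length p < k \<and> k \<le> length y \<longrightarrow> \<not> Z (take k y))"
proof
  assume "(\<forall>k. length p < k \<and> k \<le> length x \<longrightarrow> \<not> Z (take k x)) \<and>
    (\<forall>k. length p < k \<and> k \<le> length y \<longrightarrow> \<not> Z (take k y))"
  then have "label Z x = label Z (take (length p) x)" "label Z y = label Z (take (length p) y)"
    using assms by (intro label_take_eq; simp)+
  then show "label Z x = label Z y" using assms by simp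
next
  assume eq: "label Z x = label Z y"
  have False if k: "length p < k" "k \<le> length x'" "Z (take k x')"
     and x'y': "(x' = x \<and> y' = y) \<or> (x' = y \<and> y' = x)" for k x' y'
  proof -
    have long: "length p < length (label Z x')"
      using length_label_ge[of k x' Z] k by auto
    obtain wx where "x' = label Z x' @ wx" using label_prefix by blast
    obtain wy where "y' = label Z y' @ wy" using label_prefix by blast
    moreover have "label Z x' = label Z y'" using eq x'y' by auto
    ultimately have "x' ! length p = y' ! length p"
      using long by (metis \<open>x' = label Z x' @ wx\<close> nth_append)
    then show False using x'y' assms by auto
  qed
  then show "(\<forall>k. length p < k \<and> k \<le> length x \<longrightarrow> \<not> Z (take k x)) \<and>
    (\<forall>k. length p < k \<and> k \<le> length y \<longrightarrow> \<not> Z (take k y))"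
    by blast
qed

lemma prob_Pi_pmf_bernoulli_all_False:
  assumes "finite S" "U \<subseteq> S" "\<And>u. u \<in> U \<Longrightarrow> 0 \<le> r u \<and> r u \<le> 1"
  shows "measure_pmf.prob (Pi_pmf S False (\<lambda>u. bernoulli_pmf (r u))) {Z. \<forall>u\<in>U. \<not> Z u}
         = (\<Prod>u\<in>U. 1 - r u)"
proof -
  define B where "B u = (if u \<in> U then {False} else UNIV)" for u
  have "{Z. \<forall>u\<in>U. \<not> Z u} = Pi S B" using assms(2) by (auto simp: B_def Pi_def)
  then have "measure_pmf.prob (Pi_pmf S False (\<lambda>u. bernoulli_pmf (r u))) {Z. \<forall>u\<in>U. \<not> Z u}
     = (\<Prod>u\<in>S. measure_pmf.prob (bernoulli_pmf (r u)) (B u))"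
    using assms(1) by (simp add: measure_Pi_pmf_Pi)
  also have "\<dots> = (\<Prod>u\<in>S. if u \<in> U then 1 - r u else 1)"
    using assms(3) by (intro prod.cong refl) (auto simp: B_def measure_pmf_single)
  also have "\<dots> = (\<Prod>u\<in>S \<inter> U. 1 - r u)"
    using assms(1) by (simp add: prod.inter_restrict)
  finally show ?thesis
    using assms(2) by (simp add: Int_absorb1)
qed

lemma prob_same_label:
  assumes rho: "\<And>d. d \<in> {1..D} \<Longrightarrow> 0 \<le> rho d \<and> rho d \<le> 1"
    and "i \<noteq> j" and x: "x = p @ i # a" and y: "y = p @ j # b"
    and "x \<in> leaves D mu" "y \<in> leaves D mu"
  shows "measure_pmf.prob (Z_pmf D mu rho) {Z. label Z x = label Z y}
       = (\<Prod>d\<in>{length p<..D}. (1 - rho d)^2)"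
proof -
  have xy: "set x \<subseteq> {0..<mu}" "set y \<subseteq> {0..<mu}" "length x = D" "length y = D"
    using assms(5,6) by (auto simp: leaves_def level_def nodes_def)
  define K where "K = {length p<..D}"
  define Ux where "Ux = (\<lambda>k. take k x) ` K"
  define Uy where "Uy = (\<lambda>k. take k y) ` K"
  have event: "{Z. label Z x = label Z y} = {Z. \<forall>u\<in>Ux \<union> Uy. \<not> Z u}"
    using label_eq_iff[OF \<open>i \<noteq> j\<close> x y] xy by (auto simp: Ux_def Uy_def K_def)
  have "Ux \<union> Uy \<subseteq> nodes D mu - {[]}"
    using xy set_take_subset[of _ x] set_take_subset[of _ y]
    by (fastforce simp: Ux_def Uy_def K_def nodes_def)
  moreover have "0 \<le> rho (length u) \<and> rho (length u) \<le> 1" if "u \<in> Ux \<union> Uy" for u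
    using that xy rho by (auto simp: Ux_def Uy_def K_def)
  ultimately have "measure_pmf.prob (Z_pmf D mu rho) {Z. label Z x = label Z y} =
      (\<Prod>u\<in>Ux \<union> Uy. 1 - rho (length u))"
    unfolding Z_pmf_def event using finite_nodes
    by (intro prob_Pi_pmf_bernoulli_all_False) auto
  also have "\<dots> = (\<Prod>u\<in>Ux. 1 - rho (length u)) * (\<Prod>u\<in>Uy. 1 - rho (length u))"
  proof (rule prod.union_disjoint)
    show "Ux \<inter> Uy = {}"
    proof (rule ccontr)
      assume "Ux \<inter> Uy \<noteq> {}"
      then obtain k k' where "k \<in> K" "k' \<in> K" "take k x = take k' y"
        by (auto simp: Ux_def Uy_def)
      moreover from this have "k = k'"
        using xy by (metis K_def greaterThanAtMost_iff length_take min.absorb2)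
      ultimately have "take (Suc (length p)) (take k x) = take (Suc (length p)) (take k y)" by simp
      then show False
        using \<open>k \<in> K\<close> \<open>i \<noteq> j\<close> x y by (simp add: K_def min_def split: if_splits)
    qed
  qed (auto simp: Ux_def Uy_def K_def)
  also have "(\<Prod>u\<in>Ux. 1 - rho (length u)) = (\<Prod>k\<in>K. 1 - rho k)"
    using xy unfolding Ux_def
    by (subst prod.reindex) (auto simp: inj_on_def K_def intro!: prod.cong dest!: arg_cong[where f=length])
  also have "(\<Prod>u\<in>Uy. 1 - rho (length u)) = (\<Prod>k\<in>K. 1 - rho k)"
    using xy unfolding Uy_def
    by (subst prod.reindex) (auto simp: inj_on_def K_def intro!: prod.cong dest!: arg_cong[where f=length])
  finally show ?thesis
    by (simp add: K_def power2_eq_square prod.distrib)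
qed

lemma prob_tame_pair:
  assumes "x \<noteq> y" "x \<in> leaves D mu" "y \<in> leaves D mu" "0 \<le> omega" "omega \<le> 1"
  shows "measure_pmf.prob (W_pmf D mu omega) {W. \<not> W x \<and> \<not> W y} = (1 - omega)^2"
proof -
  have event: "{W. \<not> W x \<and> \<not> W y} = {W. \<forall>u\<in>{x, y}. \<not> W u}" by auto
  have "finite (leaves D mu)"
    by (simp add: leaves_def finite_level)
  then show ?thesis
    unfolding W_pmf_def event using assms
    by (subst prob_Pi_pmf_bernoulli_all_False) (auto simp: power2_eq_square)
qed

definition edge_prob :: "nat \<Rightarrow> nat \<Rightarrow> (nat \<Rightarrow> real) \<Rightarrow> real \<Rightarrow>
    ((nat list \<Rightarrow> bool) \<Rightarrow> (nat list \<Rightarrow> bool) \<Rightarrow> nat list \<times> nat list \<Rightarrow> bool) \<Rightarrow>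
    nat list \<Rightarrow> nat list \<Rightarrow> real" where
  "edge_prob D mu rho omega R x y = measure_pmf.expectation (Z_pmf D mu rho) (\<lambda>Z.
     measure_pmf.expectation (W_pmf D mu omega) (\<lambda>W. of_bool (R Z W (x, y))))"

lemma edge_prob_nonneg: "0 \<le> edge_prob D mu rho omega R x y"
  unfolding edge_prob_def by (intro Bochner_Integration.integral_nonneg) auto

lemma abs_edge_prob_le: "\<bar>edge_prob D mu rho omega R x y\<bar> \<le> 1"
  unfolding edge_prob_def by (intro expectation_abs_le) simp

lemma edge_prob_agreement_diag: "edge_prob D mu rho omega (\<lambda>Z W. is_agreement Z) x x = 0"
  by (simp add: edge_prob_def is_agreement_def)

lemma edge_prob_conflict_diag: "edge_prob D mu rho omega is_conflict x x = 0"
  by (simp add: edge_prob_def is_conflict_def)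

lemma depths_below_split:
  assumes "p @ i # w \<in> leaves D mu"
  shows "{length p<..D} = {D - length w..D}"
  using assms by (auto simp: leaves_def level_def)

lemma edge_prob_agreement:
  assumes rho: "\<And>d. d \<in> {1..D} \<Longrightarrow> 0 \<le> rho d \<and> rho d \<le> 1"
    and "i \<noteq> j" "p @ i # w1 \<in> leaves D mu" "p @ j # w2 \<in> leaves D mu"
  shows "edge_prob D mu rho omega (\<lambda>Z W. is_agreement Z) (p @ i # w1) (p @ j # w2)
       = A_coef D rho (length w1)"
proof -
  have "edge_prob D mu rho omega (\<lambda>Z W. is_agreement Z) (p @ i # w1) (p @ j # w2) =
      measure_pmf.prob (Z_pmf D mu rho) {Z. label Z (p @ i # w1) = label Z (p @ j # w2)}"
    using \<open>i \<noteq> j\<close> by (simp add: edge_prob_def is_agreement_def expectation_of_bool_eq_prob)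
  also have "\<dots> = A_coef D rho (length w1)"
    using prob_same_label[OF rho assms(2) refl refl assms(3,4)] depths_below_split[OF assms(3)]
    by (simp add: A_coef_def)
  finally show ?thesis .
qed

lemma edge_prob_conflict:
  assumes rho: "\<And>d. d \<in> {1..D} \<Longrightarrow> 0 \<le> rho d \<and> rho d \<le> 1"
    and omega: "0 \<le> omega" "omega \<le> 1"
    and "i \<noteq> j" and x: "p @ i # w1 \<in> leaves D mu" and y: "p @ j # w2 \<in> leaves D mu"
  shows "edge_prob D mu rho omega is_conflict (p @ i # w1) (p @ j # w2) = C_coef D rho omega (length w1)"
proof -
  define x where "x = p @ i # w1"
  define y where "y = p @ j # w2"
  have "x \<noteq> y" using \<open>i \<noteq> j\<close> by (simp add: x_def y_def)
  have "measure_pmf.expectation (W_pmf D mu omega) (\<lambda>W. of_bool (W x \<or> W y)) =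
      1 - measure_pmf.prob (W_pmf D mu omega) {W. \<not> W x \<and> \<not> W y}"
    using expectation_of_bool_not_eq_prob[of "W_pmf D mu omega" "\<lambda>W. \<not> W x \<and> \<not> W y"] by simp
  also have "\<dots> = 1 - (1 - omega)^2"
    using prob_tame_pair[OF \<open>x \<noteq> y\<close> _ _ omega] x y by (simp add: x_def y_def)
  finally have wild: "measure_pmf.expectation (W_pmf D mu omega) (\<lambda>W. of_bool (W x \<or> W y)) =
      omega * (2 - omega)"
    by (simp add: power2_eq_square algebra_simps)
  have "edge_prob D mu rho omega is_conflict x y =
      measure_pmf.expectation (Z_pmf D mu rho) (\<lambda>Z. of_bool (label Z x \<noteq> label Z y) *
        measure_pmf.expectation (W_pmf D mu omega) (\<lambda>W. of_bool (W x \<or> W y)))"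
    unfolding edge_prob_def is_conflict_def
    by (intro Bochner_Integration.integral_cong refl) (simp flip: integral_mult_right_zero)
  also have "\<dots> = (1 - measure_pmf.prob (Z_pmf D mu rho) {Z. label Z x = label Z y}) *
      (omega * (2 - omega))"
    by (simp only: wild) (simp add: expectation_of_bool_not_eq_prob)
  also have "\<dots> = C_coef D rho omega (length w1)"
    using prob_same_label[OF rho \<open>i \<noteq> j\<close> x_def y_def] x y depths_below_split[OF x]
    by (simp add: x_def y_def C_coef_def A_coef_def)
  finally show ?thesis by (simp add: x_def y_def)
qed

lemma expectation_replicate_pmf_Suc:
  fixes h :: "'a list \<Rightarrow> real"
  assumes "\<And>w. \<bar>h w\<bar> \<le> B"
  shows "measure_pmf.expectation (replicate_pmf (Suc k) p) h =
    measure_pmf.expectation p (\<lambda>i. measure_pmf.expectation (replicate_pmf k p) (\<lambda>w. h (i # w)))"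
  using assms by (simp add: expectation_bind_pmf[where B=B])

lemma expectation_uniform_index_pair:
  fixes G :: "nat \<Rightarrow> nat \<Rightarrow> real"
  assumes "mu > 0" and "\<And>i. i < mu \<Longrightarrow> G i i = d"
    and "\<And>i j. i < mu \<Longrightarrow> j < mu \<Longrightarrow> i \<noteq> j \<Longrightarrow> G i j = c"
  shows "measure_pmf.expectation (pmf_of_set {0..<mu}) (\<lambda>i.
           measure_pmf.expectation (pmf_of_set {0..<mu}) (G i))
         = (d + (real mu - 1) * c) / real mu"
proof -
  have row: "(\<Sum>j<mu. G i j) = real mu * c + (d - c)" if "i < mu" for i
  proof -
    have "(\<Sum>j<mu. G i j) = (\<Sum>j<mu. c + (if j = i then d - c else 0))"
      using assms that by (intro sum.cong) auto
    then show ?thesis using that by (simp add: sum.distrib)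
  qed
  have average: "measure_pmf.expectation (pmf_of_set {0..<mu}) g = (\<Sum>i<mu. g i) / real mu"
    for g :: "nat \<Rightarrow> real"
    using assms(1) by (subst integral_pmf_of_set) (auto simp: atLeast0LessThan)
  have "measure_pmf.expectation (pmf_of_set {0..<mu}) (\<lambda>i.
           measure_pmf.expectation (pmf_of_set {0..<mu}) (G i))
      = (\<Sum>i<mu. (real mu * c + (d - c)) / real mu) / real mu"
    by (simp add: average row)
  also have "\<dots> = (real mu * c + (d - c)) / real mu"
    using assms(1) by simp
  finally show ?thesis
    by (simp add: algebra_simps)
qed

lemma expectation_uniform_suffix_pair:
  fixes phi :: "nat list \<Rightarrow> nat list \<Rightarrow> real" and a :: "nat \<Rightarrow> real"
  assumes mu: "mu > 0"
    and bound: "\<And>x y. \<bar>phi x y\<bar> \<le> B"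
    and diag: "\<And>x. phi x x = 0"
    and split: "\<And>p i j w1 w2. i \<noteq> j \<Longrightarrow> p @ i # w1 \<in> leaves D mu \<Longrightarrow> p @ j # w2 \<in> leaves D mu \<Longrightarrow>
        phi (p @ i # w1) (p @ j # w2) = a (length w1)"
  shows "set v \<subseteq> {0..<mu} \<Longrightarrow> length v + s = D \<Longrightarrow>
    measure_pmf.expectation (uniform_words mu s) (\<lambda>w1.
      measure_pmf.expectation (uniform_words mu s) (\<lambda>w2. phi (v @ w1) (v @ w2)))
    = (real mu - 1) * (\<Sum>t<s. a t * real mu ^ t) / real mu ^ s"
proof (induction s arbitrary: v)
  case 0
  then show ?case by (simp add: diag)
next
  case (Suc s)
  define G where "G i j = measure_pmf.expectation (uniform_words mu s) (\<lambda>w1.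
      measure_pmf.expectation (uniform_words mu s) (\<lambda>w2. phi (v @ i # w1) (v @ j # w2)))" for i j
  have inner_bound: "\<bar>measure_pmf.expectation M (\<lambda>w2. phi x (y w2))\<bar> \<le> B"
    for M :: "nat list pmf" and x y
    by (rule expectation_abs_le) (rule bound)
  have "measure_pmf.expectation (uniform_words mu (Suc s)) (\<lambda>w1.
          measure_pmf.expectation (uniform_words mu (Suc s)) (\<lambda>w2. phi (v @ w1) (v @ w2)))
      = measure_pmf.expectation (pmf_of_set {0..<mu}) (\<lambda>i.
          measure_pmf.expectation (uniform_words mu s) (\<lambda>w1.
          measure_pmf.expectation (pmf_of_set {0..<mu}) (\<lambda>j.
          measure_pmf.expectation (uniform_words mu s) (\<lambda>w2. phi (v @ i # w1) (v @ j # w2)))))"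
    by (subst expectation_replicate_pmf_Suc[where B=B], rule inner_bound)
       (subst expectation_replicate_pmf_Suc[where B=B], simp_all add: bound)
  also have "\<dots> = measure_pmf.expectation (pmf_of_set {0..<mu}) (\<lambda>i.
          measure_pmf.expectation (pmf_of_set {0..<mu}) (G i))"
    unfolding G_def using inner_bound
    by (intro Bochner_Integration.integral_cong refl expectation_commute_pmf)
  also have "\<dots> = ((real mu - 1) * (\<Sum>t<s. a t * real mu ^ t) / real mu ^ s + (real mu - 1) * a s)
      / real mu"
  proof (rule expectation_uniform_index_pair[OF mu])
    show "G i i = (real mu - 1) * (\<Sum>t<s. a t * real mu ^ t) / real mu ^ s" if "i < mu" for i
      unfolding G_def using Suc.IH[of "v @ [i]"] Suc.prems that by auto
    show "G i j = a s" if "i < mu" "j < mu" "i \<noteq> j" for i j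
      unfolding G_def
    proof (intro expectation_eq_const_on_set_pmf)
      fix w1 w2
      assume "w1 \<in> set_pmf (uniform_words mu s)" "w2 \<in> set_pmf (uniform_words mu s)"
      then have "v @ i # w1 \<in> leaves D mu" "v @ j # w2 \<in> leaves D mu" "length w1 = s"
        using Suc.prems that mu
        by (auto simp: set_uniform_words leaves_def level_def nodes_def)
      then show "phi (v @ i # w1) (v @ j # w2) = a s"
        using split that by auto
    qed
  qed
  also have "\<dots> = (real mu - 1) * (\<Sum>t<Suc s. a t * real mu ^ t) / real mu ^ Suc s"
    using mu by (simp add: field_simps)
  finally show ?case .
qed

lemma expectation_attempt_pmf:
  fixes phi :: "nat list \<Rightarrow> nat list \<Rightarrow> real" and a :: "nat \<Rightarrow> real"
  assumes mu: "mu > 0" and nu: "nu \<noteq> 0"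
    and q: "\<And>s. s \<in> {1..D} \<Longrightarrow> 0 \<le> q s" "(\<Sum>s = 1..D. q s) = 1"
    and bound: "\<And>x y. \<bar>phi x y\<bar> \<le> B"
    and diag: "\<And>x. phi x x = 0"
    and split: "\<And>p i j w1 w2. i \<noteq> j \<Longrightarrow> p @ i # w1 \<in> leaves D mu \<Longrightarrow> p @ j # w2 \<in> leaves D mu \<Longrightarrow>
        phi (p @ i # w1) (p @ j # w2) = a (length w1)"
  shows "measure_pmf.expectation (attempt_pmf D mu nu q) (\<lambda>e. phi (fst e) (snd e))
       = (real mu - 1) * (\<Sum>s = 1..D. q s * real mu powi (- int s) * (\<Sum>t = 0..s - 1. a t * real mu ^ t))"
proof -
  have "measure_pmf.expectation (attempt_pmf D mu nu q) (\<lambda>e. phi (fst e) (snd e))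
     = measure_pmf.expectation (height_pmf D q) (\<lambda>s.
         measure_pmf.expectation (start_pmf D mu nu s) (\<lambda>v.
         measure_pmf.expectation (walk_pmf D mu nu v) (\<lambda>x.
         measure_pmf.expectation (walk_pmf D mu nu v) (\<lambda>y. phi x y))))"
    unfolding attempt_pmf_def using bound by (simp add: expectation_bind_pmf[where B=B])
  also have "\<dots> = (\<Sum>s = 1..D. q s *
         measure_pmf.expectation (start_pmf D mu nu s) (\<lambda>v.
         measure_pmf.expectation (walk_pmf D mu nu v) (\<lambda>x.
         measure_pmf.expectation (walk_pmf D mu nu v) (\<lambda>y. phi x y))))"
    by (rule expectation_height_pmf[OF q])
  also have "\<dots> = (\<Sum>s = 1..D. q s * ((real mu - 1) * (\<Sum>t<s. a t * real mu ^ t) / real mu ^ s))"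
  proof (intro sum.cong refl)
    fix s assume s: "s \<in> {1..D}"
    have "measure_pmf.expectation (start_pmf D mu nu s) (\<lambda>v.
            measure_pmf.expectation (walk_pmf D mu nu v) (\<lambda>x.
            measure_pmf.expectation (walk_pmf D mu nu v) (\<lambda>y. phi x y)))
        = (real mu - 1) * (\<Sum>t<s. a t * real mu ^ t) / real mu ^ s"
    proof (rule expectation_eq_const_on_set_pmf)
      fix v assume "v \<in> set_pmf (start_pmf D mu nu s)"
      then have v: "set v \<subseteq> {0..<mu}" "length v + s = D"
        using s by (auto simp: set_start_pmf[OF mu nu] level_eq)
      then have "D - length v = s" by simp
      then show "measure_pmf.expectation (walk_pmf D mu nu v) (\<lambda>x.
            measure_pmf.expectation (walk_pmf D mu nu v) (\<lambda>y. phi x y))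
          = (real mu - 1) * (\<Sum>t<s. a t * real mu ^ t) / real mu ^ s"
        using expectation_uniform_suffix_pair[where phi=phi and a=a, OF mu bound diag split v]
        using v by (simp add: walk_pmf_eq[OF mu nu] \<open>D - length v = s\<close>)
    qed
    then show "q s * measure_pmf.expectation (start_pmf D mu nu s) (\<lambda>v.
            measure_pmf.expectation (walk_pmf D mu nu v) (\<lambda>x.
            measure_pmf.expectation (walk_pmf D mu nu v) (\<lambda>y. phi x y)))
        = q s * ((real mu - 1) * (\<Sum>t<s. a t * real mu ^ t) / real mu ^ s)"
      by simp
  qed
  also have "\<dots> = (real mu - 1) *
      (\<Sum>s = 1..D. q s * real mu powi (- int s) * (\<Sum>t = 0..s - 1. a t * real mu ^ t))"
    unfolding sum_distrib_left[where A="{1..D}"]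
  proof (intro sum.cong refl)
    fix s :: nat assume "s \<in> {1..D}"
    then have "{0..s - 1} = {..<s}" by auto
    then show "q s * ((real mu - 1) * (\<Sum>t<s. a t * real mu ^ t) / real mu ^ s) =
        (real mu - 1) * (q s * real mu powi (- int s) * (\<Sum>t = 0..s - 1. a t * real mu ^ t))"
      by (simp add: power_int_minus divide_inverse)
  qed
  finally show ?thesis .
qed

lemma expectation_attempt_agreement:
  assumes "mu > 0" "nu \<noteq> 0" "\<And>s. s \<in> {1..D} \<Longrightarrow> 0 \<le> q s" "(\<Sum>s = 1..D. q s) = 1"
    and rho: "\<And>d. d \<in> {1..D} \<Longrightarrow> 0 \<le> rho d \<and> rho d \<le> 1"
  shows "measure_pmf.expectation (attempt_pmf D mu nu q)
      (\<lambda>e. edge_prob D mu rho omega (\<lambda>Z W. is_agreement Z) (fst e) (snd e)) =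
    (real mu - 1) * (\<Sum>s = 1..D. q s * real mu powi (- int s) *
      (\<Sum>t = 0..s - 1. A_coef D rho t * real mu ^ t))"
proof (rule expectation_attempt_pmf[OF assms(1,2) _ assms(4) abs_edge_prob_le])
  show "0 \<le> q s" if "s \<in> {1..D}" for s
    using that by (rule assms(3))
qed (rule edge_prob_agreement_diag, rule edge_prob_agreement[OF rho])

lemma expectation_attempt_conflict:
  assumes "mu > 0" "nu \<noteq> 0" "\<And>s. s \<in> {1..D} \<Longrightarrow> 0 \<le> q s" "(\<Sum>s = 1..D. q s) = 1"
    and rho: "\<And>d. d \<in> {1..D} \<Longrightarrow> 0 \<le> rho d \<and> rho d \<le> 1"
    and omega: "0 \<le> omega" "omega \<le> 1"
  shows "measure_pmf.expectation (attempt_pmf D mu nu q)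
      (\<lambda>e. edge_prob D mu rho omega is_conflict (fst e) (snd e)) =
    (real mu - 1) * (\<Sum>s = 1..D. q s * real mu powi (- int s) *
      (\<Sum>t = 0..s - 1. C_coef D rho omega t * real mu ^ t))"
proof (rule expectation_attempt_pmf[OF assms(1,2) _ assms(4) abs_edge_prob_le])
  show "0 \<le> q s" if "s \<in> {1..D}" for s
    using that by (rule assms(3))
qed (rule edge_prob_conflict_diag, rule edge_prob_conflict[OF rho omega])

lemma length_attempts_pmf: "es \<in> set_pmf (attempts_pmf D mu nu q n) \<Longrightarrow> length es = n"
  by (induction n arbitrary: es) auto

lemma length_filter_attempts_pmf_le:
  "es \<in> set_pmf (attempts_pmf D mu nu q n) \<Longrightarrow> length (filter P es) \<le> n"
  using length_attempts_pmf length_filter_le by metis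

lemma expectation_count_attempts_pmf:
  "measure_pmf.expectation (attempts_pmf D mu nu q n) (\<lambda>es. real (length (filter P es)))
   = real n * measure_pmf.expectation (attempt_pmf D mu nu q) (\<lambda>e. of_bool (P e))"
proof (induction n)
  case 0
  then show ?case by simp
next
  case (Suc n)
  let ?A = "attempts_pmf D mu nu q n" and ?c = "measure_pmf.expectation (attempt_pmf D mu nu q) (\<lambda>e. of_bool (P e))"
  have "\<bar>real (length (filter P es))\<bar> \<le> real (Suc n)"
    if "es \<in> set_pmf (attempts_pmf D mu nu q (Suc n))" for es
    using length_filter_attempts_pmf_le[OF that] by (simp flip: of_nat_Suc)
  then have "measure_pmf.expectation (attempts_pmf D mu nu q (Suc n)) (\<lambda>es. real (length (filter P es)))
     = measure_pmf.expectation (attempt_pmf D mu nu q) (\<lambda>e.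
         measure_pmf.expectation ?A (\<lambda>es. real (length (filter P (e # es)))))"
    unfolding attempts_pmf.simps by (subst expectation_bind_pmf[where B="real (Suc n)"]) simp_all
  also have "\<dots> = measure_pmf.expectation (attempt_pmf D mu nu q) (\<lambda>e. of_bool (P e) + real n * ?c)"
  proof (rule Bochner_Integration.integral_cong[OF refl])
    fix e
    have "integrable (measure_pmf ?A) (\<lambda>es. real (length (filter P es)))"
      using length_filter_attempts_pmf_le by (intro integrable_measure_pmf_bounded[where B="real n"]) simp
    then show "measure_pmf.expectation ?A (\<lambda>es. real (length (filter P (e # es)))) = of_bool (P e) + real n * ?c"
      by (simp add: Suc.IH)
  qed
  also have "\<dots> = real (Suc n) * ?c"
    using integrable_measure_pmf_bounded[of "attempt_pmf D mu nu q" "\<lambda>e. of_bool (P e)" 1]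
    by (subst Bochner_Integration.integral_add) (simp_all add: algebra_simps)
  finally show ?case .
qed

definition edge_count_pmf :: "nat \<Rightarrow> nat \<Rightarrow> real \<Rightarrow> (nat \<Rightarrow> real) \<Rightarrow> real \<Rightarrow> (nat \<Rightarrow> real) \<Rightarrow>
    ((nat list \<Rightarrow> bool) \<Rightarrow> (nat list \<Rightarrow> bool) \<Rightarrow> nat list \<times> nat list \<Rightarrow> bool) \<Rightarrow> nat \<Rightarrow> nat pmf" where
  "edge_count_pmf D mu nu rho omega q R n =
     bind_pmf (Z_pmf D mu rho) (\<lambda>Z. bind_pmf (W_pmf D mu omega) (\<lambda>W.
       map_pmf (\<lambda>es. length (filter (R Z W) es)) (attempts_pmf D mu nu q n)))"

lemma edge_count_pmf_le: "m \<in> set_pmf (edge_count_pmf D mu nu rho omega q R n) \<Longrightarrow> m \<le> n"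
  by (auto simp: edge_count_pmf_def length_filter_attempts_pmf_le)

lemma expectation_edge_count_pmf:
  "measure_pmf.expectation (edge_count_pmf D mu nu rho omega q R n) real =
   real n * measure_pmf.expectation (attempt_pmf D mu nu q)
     (\<lambda>e. edge_prob D mu rho omega R (fst e) (snd e))"
proof -
  let ?Z = "Z_pmf D mu rho" and ?W = "W_pmf D mu omega" and ?a = "attempt_pmf D mu nu q"
  have W_bound: "\<bar>measure_pmf.expectation ?W (\<lambda>W. of_bool (R Z W e) :: real)\<bar> \<le> 1" for Z e
    by (intro expectation_abs_le) simp
  have inner: "measure_pmf.expectation
      (bind_pmf ?W (\<lambda>W. map_pmf (\<lambda>es. length (filter (R Z W) es)) (attempts_pmf D mu nu q n))) real =
    measure_pmf.expectation ?W (\<lambda>W.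
      measure_pmf.expectation (attempts_pmf D mu nu q n) (\<lambda>es. real (length (filter (R Z W) es))))" for Z
    by (subst expectation_bind_pmf[where B="real n"]) (auto simp: length_filter_attempts_pmf_le)
  have "measure_pmf.expectation (edge_count_pmf D mu nu rho omega q R n) real =
      measure_pmf.expectation ?Z (\<lambda>Z. measure_pmf.expectation ?W (\<lambda>W.
        measure_pmf.expectation (attempts_pmf D mu nu q n) (\<lambda>es. real (length (filter (R Z W) es)))))"
    using edge_count_pmf_le[of _ D mu nu rho omega q R n] unfolding edge_count_pmf_def
    by (subst expectation_bind_pmf[where B="real n"]) (force, simp only: inner)
  also have "\<dots> = measure_pmf.expectation ?Z (\<lambda>Z. measure_pmf.expectation ?W (\<lambda>W.
        real n * measure_pmf.expectation ?a (\<lambda>e. of_bool (R Z W e))))"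
    by (simp only: expectation_count_attempts_pmf)
  also have "\<dots> = real n * measure_pmf.expectation ?Z (\<lambda>Z. measure_pmf.expectation ?a (\<lambda>e.
        measure_pmf.expectation ?W (\<lambda>W. of_bool (R Z W e))))"
    by (simp add: expectation_commute_pmf[where B=1 and M="?W"])
  also have "\<dots> = real n * measure_pmf.expectation ?a (\<lambda>e.
        edge_prob D mu rho omega R (fst e) (snd e))"
    unfolding edge_prob_def
    by (subst expectation_commute_pmf[where B=1 and f="\<lambda>Z e. measure_pmf.expectation ?W
        (\<lambda>W. of_bool (R Z W e))"]) (rule W_bound, simp)
  finally show ?thesis .
qed

lemma expectation_edge_count_mixture:
  assumes "integrable (measure_pmf N) real"
  shows "measure_pmf.expectation (bind_pmf N (edge_count_pmf D mu nu rho omega q R)) real =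
    measure_pmf.expectation (attempt_pmf D mu nu q) (\<lambda>e. edge_prob D mu rho omega R (fst e) (snd e))
    * measure_pmf.expectation N real"
  using assms edge_count_pmf_le
  by (intro expectation_bind_pmf_linear expectation_edge_count_pmf integral_nonneg)
     (auto simp: edge_prob_nonneg)

lemma expectation_agreements:
  assumes "integrable (measure_pmf N) real"
  shows "measure_pmf.expectation (edge_experiment D mu nu rho omega q N) (\<lambda>m. real (fst m)) =
    measure_pmf.expectation (attempt_pmf D mu nu q)
      (\<lambda>e. edge_prob D mu rho omega (\<lambda>Z W. is_agreement Z) (fst e) (snd e))
    * measure_pmf.expectation N real"
proof -
  have "map_pmf fst (edge_experiment D mu nu rho omega q N) =
      bind_pmf N (edge_count_pmf D mu nu rho omega q (\<lambda>Z W. is_agreement Z))"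
    unfolding edge_experiment_def edge_count_pmf_def
    by (simp only: map_bind_pmf pmf.map_comp o_def prod.sel)
  then have "measure_pmf.expectation (edge_experiment D mu nu rho omega q N) (\<lambda>m. real (fst m)) =
      measure_pmf.expectation (bind_pmf N (edge_count_pmf D mu nu rho omega q (\<lambda>Z W. is_agreement Z))) real"
    by (metis integral_map_pmf)
  then show ?thesis
    by (simp only: expectation_edge_count_mixture[OF assms])
qed

lemma expectation_conflicts:
  assumes "integrable (measure_pmf N) real"
  shows "measure_pmf.expectation (edge_experiment D mu nu rho omega q N) (\<lambda>m. real (snd m)) =
    measure_pmf.expectation (attempt_pmf D mu nu q)
      (\<lambda>e. edge_prob D mu rho omega is_conflict (fst e) (snd e))
    * measure_pmf.expectation N real"
proof -
  have "map_pmf snd (edge_experiment D mu nu rho omega q N) =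
      bind_pmf N (edge_count_pmf D mu nu rho omega q is_conflict)"
    unfolding edge_experiment_def edge_count_pmf_def
    by (simp only: map_bind_pmf pmf.map_comp o_def prod.sel)
  then have "measure_pmf.expectation (edge_experiment D mu nu rho omega q N) (\<lambda>m. real (snd m)) =
      measure_pmf.expectation (bind_pmf N (edge_count_pmf D mu nu rho omega q is_conflict)) real"
    by (metis integral_map_pmf)
  then show ?thesis
    by (simp only: expectation_edge_count_mixture[OF assms])
qed

theorem corollary6p6:
  fixes mu D :: nat and nu omega :: real and rho q :: "nat \<Rightarrow> real" and N :: "nat pmf"
  assumes "mu \<ge> 2" and "D \<ge> 1" and "nu > 0"
    and "\<And>d. d \<in> {1..D} \<Longrightarrow> 0 \<le> rho d \<and> rho d \<le> 1"
    and "0 \<le> omega" and "omega \<le> 1"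
    and "\<And>s. s \<in> {1..D} \<Longrightarrow> 0 \<le> q s" and "(\<Sum>s = 1..D. q s) = 1"
    and "integrable (measure_pmf N) real"
    and "measure_pmf.expectation N real = nu * real mu ^ D / 2"
  shows "measure_pmf.expectation (edge_experiment D mu nu rho omega q N) (\<lambda>m. real (fst m))
           = nu * real mu ^ D * (real mu - 1) / 2 *
             (\<Sum>s = 1..D. q s * real mu powi (- int s) *
                (\<Sum>t = 0..s - 1. A_coef D rho t * real mu ^ t))
         \<and> measure_pmf.expectation (edge_experiment D mu nu rho omega q N) (\<lambda>m. real (snd m))
           = nu * real mu ^ D * (real mu - 1) / 2 *
             (\<Sum>s = 1..D. q s * real mu powi (- int s) *
                (\<Sum>t = 0..s - 1. C_coef D rho omega t * real mu ^ t))"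
proof -
  have mu: "mu > 0" and nu: "nu \<noteq> 0" using assms(1,3) by auto
  have rearrange: "(real mu - 1) * S * (nu * real mu ^ D / 2) = nu * real mu ^ D * (real mu - 1) / 2 * S"
    for S :: real
    by simp
  show ?thesis
    by (simp only: expectation_agreements[OF assms(9)] expectation_conflicts[OF assms(9)] assms(10)
        expectation_attempt_agreement[OF mu nu assms(7,8,4)]
        expectation_attempt_conflict[OF mu nu assms(7,8,4-6)] rearrange)
qed

end
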